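(* Denote $\left\|G_m\right\|_{\mathcal{H}_2}^2$ as $f(s_1,s_2)$. Then \begin{equation*} f(s_1,s_2)=2(s_1+s_2)\, C \mathcal{A}_2^{-1}\left(s_1s_2 \mathbf{B}+ A \mathbf{B} A^T\right) \mathcal{A}_2^{-T} C^T, \end{equation*} where $\mathcal{A}_2=\left(s_1 I-A\right)\left(s_2 I-A\right)$ and $\mathbf{B}=B B^T$.
   Context: Let $G(s)=C(sI-A)^{-1}B$ be a stable SISO continuous-time LTI system of order $n$, with $A\in\mathbb{R}^{n\times n}$, $B\in\mathbb{R}^{n\times 1}$, $C\in\mathbb{R}^{1\times n}$. Consider a stable reduced-order model $G_m(s)=C_m(sI_m-A_m)^{-1}B_m$ of order $m=2$ written in the diagonal form $A_m=\operatorname{diag}(a_1,a_2)$, $B_m=[b_1\ b_2]^T$, $C_m=[1\ 1]$, which satisfies the first-order necessary conditions for $\mathcal{H}_2$ optimality, i.e. with interpolation points $s_i=-a_i$ ($i=1,2$) it interpolates $G$ and $G'$ at $s_1,s_2$: $G_m(s_i)=G(s_i)$, $G_m'(s_i)=G'(s_i)$. The interpolation points are distinct ($s_1\neq s_2$), not eigenvalues of $A$, and either both real ($s_1,s_2\in\mathbb{R}$) or a complex conjugate pair ($s_2=\bar s_1$). Define $g_i=C(s_iI-A)^{-1}B$, $i=1,2$, so that $G_m(s_i)=g_i$. The $\mathcal{H}_2$ norm is $\|G_m\|_{\mathcal{H}_2}^2=C_mP_mC_m^H$, where $P_m$ is the controllability Gramian solving $A_mP_m+P_mA_m^H+B_mB_m^H=0$.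 *)

theory Defs
  imports "HOL-Analysis.Analysis"
begin

definition cmat :: "real^'n^'m \<Rightarrow> complex^'n^'m" where
  "cmat A = (\<chi> i j. complex_of_real (A$i$j))"

definition cvec :: "real^'n \<Rightarrow> complex^'n" where
  "cvec v = (\<chi> i. complex_of_real (v$i))"

definition hadj :: "complex^'n^'m \<Rightarrow> complex^'m^'n" where
  "hadj M = (\<chi> i j. cnj (M$j$i))"

definition is_eigenvalue :: "complex^'n^'n \<Rightarrow> complex \<Rightarrow> bool" where
  "is_eigenvalue A l \<longleftrightarrow> (\<exists>v. v \<noteq> 0 \<and> A *v v = l *s v)"

definition hurwitz :: "complex^'n^'n \<Rightarrow> bool" where
  "hurwitz A \<longleftrightarrow> (\<forall>l. is_eigenvalue A l \<longrightarrow> Re l < 0)"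

text \<open>SISO transfer function C (sI - A)^{-1} B, with B a column and C a row vector.\<close>
definition tf :: "complex^'n^'n \<Rightarrow> complex^'n \<Rightarrow> complex^'n \<Rightarrow> complex \<Rightarrow> complex" where
  "tf A B C s = (\<Sum>i\<in>UNIV. C$i * ((matrix_inv (mat s - A) *v B)$i))"

end

theory Submission
  imports Defs
begin

text \<open>Since \<open>A\<^sub>m\<close> is diagonal, the Lyapunov equation is solved entrywise,
  \<open>P i j = b i * cnj (b j) / (s i + cnj (s j))\<close>, so that
  \<open>\<parallel>G\<^sub>m\<parallel>\<^sup>2 = b1 * cnj (G\<^sub>m (cnj s1)) + b2 * cnj (G\<^sub>m (cnj s2))\<close>. As
  \<open>{cnj s1, cnj s2} = {s1, s2}\<close> and \<open>G\<close> has real coefficients, this is \<open>b1 * g1 + b2 * g2\<close>.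
  On the other side, the partial fraction decomposition
  \<open>((s1 I - A) (s2 I - A))\<^sup>-\<^sup>1 = ((s1 I - A)\<^sup>-\<^sup>1 - (s2 I - A)\<^sup>-\<^sup>1) / (s2 - s1)\<close>
  turns the right-hand side into \<open>2 (s1 + s2) (s1 s2 z\<^sup>2 + w\<^sup>2)\<close> with
  \<open>z = (g1 - g2) / (s2 - s1)\<close> and \<open>w = (s1 g1 - s2 g2) / (s2 - s1)\<close>.
  Interpolation gives \<open>g i = b1 / (s i + s1) + b2 / (s i + s2)\<close>, which makes both sides the
  same rational function of \<open>s1, s2, b1, b2\<close>.\<close>

text \<open>The bilinear pairing \<open>u\<^sup>T w\<close>: the inner product of HOL-Analysis on \<open>complex^'n\<close> is
  conjugate-linear.\<close>

definition dotp :: "'a::comm_semiring_1^'n \<Rightarrow> 'a^'n \<Rightarrow> 'a" where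
  "dotp u w = (\<Sum>i\<in>UNIV. u$i * w$i)"

definition outer_prod :: "'a::times^'m \<Rightarrow> 'a^'n \<Rightarrow> 'a^'n^'m" where
  "outer_prod b c = (\<chi> i j. b$i * c$j)"

definition diag_mat :: "'a::zero^'n \<Rightarrow> 'a^'n^'n" where
  "diag_mat d = (\<chi> i j. if i = j then d$i else 0)"

definition cnj_vec :: "complex^'n \<Rightarrow> complex^'n" where
  "cnj_vec x = (\<chi> i. cnj (x$i))"

lemma matrix_inv_inverse:
  fixes M :: "'a::semiring_1^'n^'n"
  assumes "invertible M"
  shows matrix_inv_right: "M ** matrix_inv M = mat 1"
    and matrix_inv_left: "matrix_inv M ** M = mat 1"
proof -
  have "\<exists>M'. M ** M' = mat 1 \<and> M' ** M = mat 1" using assms invertible_def by blast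
  then have "M ** matrix_inv M = mat 1 \<and> matrix_inv M ** M = mat 1"
    unfolding matrix_inv_def by (rule someI_ex)
  then show "M ** matrix_inv M = mat 1" "matrix_inv M ** M = mat 1" by auto
qed

lemma matrix_inv_mult_eqI:
  fixes M :: "'a::semiring_1^'n^'n"
  assumes "invertible M" "M *v x = b"
  shows "matrix_inv M *v b = x"
  by (metis assms matrix_inv_left matrix_vector_mul_assoc matrix_vector_mul_lid)

lemma mat_mult_vector: "mat k *v x = k *s (x :: 'a::semiring_1^'n)"
  by (simp add: vec_eq_iff matrix_vector_mult_def mat_def if_distrib if_distribR
      cong del: if_weak_cong)

lemma vector_mult_mat: "x v* mat k = k *s (x :: 'a::comm_semiring_1^'n)"
  by (metis transpose_mat transpose_matrix_vector mat_mult_vector)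

lemma invertible_if_trivial_kernel:
  fixes M :: "'a::field^'n^'n"
  assumes "\<And>x. M *v x = 0 \<Longrightarrow> x = 0"
  shows "invertible M"
  using assms invertible_left_inverse matrix_left_invertible_ker by blast

lemma invertible_mat_minus_if_not_eigenvalue:
  assumes "\<not> is_eigenvalue M s"
  shows "invertible (mat s - M)"
proof (rule invertible_if_trivial_kernel)
  fix x assume "(mat s - M) *v x = 0"
  then have "M *v x = s *s x" by (simp add: matrix_vector_mult_diff_rdistrib mat_mult_vector)
  then show "x = 0" using assms unfolding is_eigenvalue_def by auto
qed

lemma dotp_matrix_vector_mult: "dotp u (X *v w) = dotp (u v* X) w"
proof -
  have "(\<Sum>i\<in>UNIV. u$i * (\<Sum>j\<in>UNIV. X$i$j * w$j)) =
      (\<Sum>i\<in>UNIV. \<Sum>j\<in>UNIV. u$i * X$i$j * w$j)"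
    by (simp add: sum_distrib_left mult.assoc)
  also have "\<dots> = (\<Sum>j\<in>UNIV. \<Sum>i\<in>UNIV. u$i * X$i$j * w$j)" by (rule sum.swap)
  also have "\<dots> = (\<Sum>j\<in>UNIV. (\<Sum>i\<in>UNIV. u$i * X$i$j) * w$j)"
    by (simp add: sum_distrib_right)
  finally show ?thesis unfolding dotp_def matrix_vector_mult_def vector_matrix_mult_def by simp
qed

lemma dotp_commute: "dotp u w = dotp w u"
  unfolding dotp_def by (simp add: mult.commute)

lemma dotp_diff_right: "dotp u (v - w) = dotp u v - dotp u (w :: 'a::comm_ring_1^'n)"
  by (simp add: dotp_def sum_subtractf right_diff_distrib)

lemma dotp_scale_left: "dotp (k *s v) u = k * dotp v u"
  by (simp add: dotp_def sum_distrib_left mult.assoc)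

lemma dotp_add_right: "dotp u (v + w) = dotp u v + dotp u w"
  by (simp add: dotp_def sum.distrib distrib_left)

lemma dotp_scale_right: "dotp u (k *s v) = k * dotp u v"
  by (simp add: dotp_def sum_distrib_left mult.left_commute)

lemma tf_eq_dotp: "tf A B C s = dotp C (matrix_inv (mat s - A) *v B)"
  unfolding tf_def dotp_def ..

lemma diag_mat_mult_vector: "diag_mat d *v v = (\<chi> i. d$i * v$i)"
  by (simp add: vec_eq_iff diag_mat_def matrix_vector_mult_def if_distrib if_distribR
      cong del: if_weak_cong)

lemma is_eigenvalue_diag_mat: "is_eigenvalue (diag_mat d) (d$i)"
  unfolding is_eigenvalue_def
  by (rule exI[of _ "axis i 1"]) (auto simp: diag_mat_mult_vector vec_eq_iff axis_def)

lemma hurwitz_diag_mat_Re_neg: "hurwitz (diag_mat d) \<Longrightarrow> Re (d$i) < 0"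
  using is_eigenvalue_diag_mat unfolding hurwitz_def by blast

lemma tf_diag_mat:
  assumes "\<And>i. s \<noteq> d$i"
  shows "tf (diag_mat d) b c s = (\<Sum>i\<in>UNIV. c$i * b$i / (s - d$i))"
proof -
  have "(mat s - diag_mat d) *v (\<chi> i. b$i / (s - d$i)) = b"
    using assms by (simp add: vec_eq_iff matrix_vector_mult_diff_rdistrib mat_mult_vector
        diag_mat_mult_vector diff_divide_distrib[symmetric] left_diff_distrib[symmetric])
  moreover have "invertible (mat s - diag_mat d)"
    by (rule invertible_if_trivial_kernel)
      (use assms in \<open>auto simp: vec_eq_iff matrix_vector_mult_diff_rdistrib mat_mult_vector
        diag_mat_mult_vector algebra_simps\<close>)
  ultimately have "matrix_inv (mat s - diag_mat d) *v b = (\<chi> i. b$i / (s - d$i))"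
    using matrix_inv_mult_eqI by blast
  then show ?thesis by (simp add: tf_def)
qed

lemma lyapunov_diag_mat_entry:
  fixes d b :: "complex^'n" and P :: "complex^'n^'n"
  assumes "diag_mat d ** P + P ** hadj (diag_mat d) + (\<chi> i j. b$i * cnj (b$j)) = 0"
    and "d$i + cnj (d$j) \<noteq> 0"
  shows "P$i$j = - b$i * cnj (b$j) / (d$i + cnj (d$j))"
proof -
  have "d$i * P$i$j + P$i$j * cnj (d$j) + b$i * cnj (b$j) = 0"
    using arg_cong[OF assms(1), of "\<lambda>M. M$i$j"]
    by (simp add: matrix_matrix_mult_def hadj_def diag_mat_def if_distrib if_distribR
        cong del: if_weak_cong)
  with assms(2) show ?thesis by (simp add: field_simps add_eq_0_iff)
qed

lemma h2_norm_diag_mat: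
  fixes d b c :: "complex^'n" and P :: "complex^'n^'n"
  assumes stable: "hurwitz (diag_mat d)"
    and lyap: "diag_mat d ** P + P ** hadj (diag_mat d) + (\<chi> i j. b$i * cnj (b$j)) = 0"
  shows "(\<Sum>i\<in>UNIV. \<Sum>j\<in>UNIV. c$i * P$i$j * cnj (c$j)) =
    (\<Sum>i\<in>UNIV. c$i * b$i * cnj (tf (diag_mat d) b c (- cnj (d$i))))"
proof (rule sum.cong[OF refl])
  fix i
  have Re_neg: "Re (d$k) < 0" for k using hurwitz_diag_mat_Re_neg[OF stable] .
  have nz: "d$i + cnj (d$j) \<noteq> 0" for j
  proof -
    have "Re (d$i + cnj (d$j)) < 0" using Re_neg[of i] Re_neg[of j] by simp
    then show ?thesis by (metis zero_complex.sel(1) less_irrefl)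
  qed
  have "tf (diag_mat d) b c (- cnj (d$i)) = (\<Sum>j\<in>UNIV. c$j * b$j / (- cnj (d$i) - d$j))"
  proof (rule tf_diag_mat)
    show "- cnj (d$i) \<noteq> d$j" for j
      using nz[of j] by (metis add.right_inverse complex_cnj_cnj complex_cnj_minus)
  qed
  then have "c$i * b$i * cnj (tf (diag_mat d) b c (- cnj (d$i))) =
      (\<Sum>j\<in>UNIV. c$i * b$i * (cnj (c$j) * cnj (b$j) / (- d$i - cnj (d$j))))"
    by (simp add: sum_distrib_left)
  also have "\<dots> = (\<Sum>j\<in>UNIV. c$i * (- b$i * cnj (b$j) / (d$i + cnj (d$j))) * cnj (c$j))"
  proof (rule sum.cong[OF refl])
    fix j
    have "- d$i - cnj (d$j) = - (d$i + cnj (d$j))" by simp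
    then show "c$i * b$i * (cnj (c$j) * cnj (b$j) / (- d$i - cnj (d$j))) =
        c$i * (- b$i * cnj (b$j) / (d$i + cnj (d$j))) * cnj (c$j)"
      by (simp only: divide_minus_right) simp
  qed
  also have "\<dots> = (\<Sum>j\<in>UNIV. c$i * P$i$j * cnj (c$j))"
    using lyapunov_diag_mat_entry[OF lyap nz] by simp
  finally show "(\<Sum>j\<in>UNIV. c$i * P$i$j * cnj (c$j)) =
      c$i * b$i * cnj (tf (diag_mat d) b c (- cnj (d$i)))" by simp
qed

lemma cmat_mult_cnj_vec: "cmat A *v cnj_vec x = cnj_vec (cmat A *v x)"
  unfolding cnj_vec_def by (simp add: vec_eq_iff matrix_vector_mult_def cmat_def)

lemma mat_minus_cmat_mult_cnj_vec:
  "(mat (cnj s) - cmat A) *v cnj_vec x = cnj_vec ((mat s - cmat A) *v x)"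
  unfolding cnj_vec_def
  by (auto simp: vec_eq_iff matrix_vector_mult_def cmat_def mat_def intro!: sum.cong)

lemma is_eigenvalue_cmat_cnj:
  assumes "is_eigenvalue (cmat A) s"
  shows "is_eigenvalue (cmat A) (cnj s)"
proof -
  obtain v where v: "v \<noteq> 0" "cmat A *v v = s *s v"
    using assms unfolding is_eigenvalue_def by blast
  have "cmat A *v cnj_vec v = cnj_vec (s *s v)" by (simp only: cmat_mult_cnj_vec v(2))
  also have "\<dots> = cnj s *s cnj_vec v" by (simp add: cnj_vec_def vec_eq_iff)
  finally have "cmat A *v cnj_vec v = cnj s *s cnj_vec v" .
  moreover have "cnj_vec v \<noteq> 0" using v(1) by (auto simp: cnj_vec_def vec_eq_iff)
  ultimately show ?thesis unfolding is_eigenvalue_def by blast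
qed

lemma tf_cmat_cnj:
  assumes "\<not> is_eigenvalue (cmat A) s"
  shows "tf (cmat A) (cvec B) (cvec C) (cnj s) = cnj (tf (cmat A) (cvec B) (cvec C) s)"
proof -
  define x where "x = matrix_inv (mat s - cmat A) *v cvec B"
  have "(mat s - cmat A) *v x = cvec B"
    using invertible_mat_minus_if_not_eigenvalue[OF assms]
    by (simp add: x_def matrix_vector_mul_assoc matrix_inv_right)
  then have "(mat (cnj s) - cmat A) *v cnj_vec x = cnj_vec (cvec B)"
    by (simp only: mat_minus_cmat_mult_cnj_vec)
  also have "cnj_vec (cvec B) = cvec B" by (simp add: cnj_vec_def cvec_def vec_eq_iff)
  finally have "(mat (cnj s) - cmat A) *v cnj_vec x = cvec B" .
  moreover have "\<not> is_eigenvalue (cmat A) (cnj s)"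
    using assms is_eigenvalue_cmat_cnj[of A "cnj s"] by auto
  ultimately have "matrix_inv (mat (cnj s) - cmat A) *v cvec B = cnj_vec x"
    by (intro matrix_inv_mult_eqI invertible_mat_minus_if_not_eigenvalue)
  then show ?thesis
    unfolding tf_eq_dotp x_def[symmetric] by (simp add: dotp_def cnj_vec_def cvec_def)
qed

lemma resolvent_factors_commute:
  fixes A :: "'a::field^'n^'n"
  shows "(mat s1 - A) *v ((mat s2 - A) *v x) = (mat s2 - A) *v ((mat s1 - A) *v x)"
  by (simp add: matrix_vector_mult_diff_rdistrib matrix_vector_mult_diff_distrib mat_mult_vector
      vector_scalar_commute vec_eq_iff algebra_simps)

lemma inverse_resolvent_product_mult_vector:
  fixes A :: "'a::field^'n^'n" and b :: "'a^'n"
  assumes inv1: "invertible (mat s1 - A)" and inv2: "invertible (mat s2 - A)" and "s1 \<noteq> s2"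
  defines "x1 \<equiv> matrix_inv (mat s1 - A) *v b" and "x2 \<equiv> matrix_inv (mat s2 - A) *v b"
  shows "matrix_inv ((mat s1 - A) ** (mat s2 - A)) *v b = (1 / (s2 - s1)) *s (x1 - x2)"
    and "matrix_inv ((mat s1 - A) ** (mat s2 - A)) *v (A *v b) =
      (1 / (s2 - s1)) *s (s1 *s x1 - s2 *s x2)"
proof -
  let ?M1 = "mat s1 - A" and ?M2 = "mat s2 - A"
  have hx1: "?M1 *v x1 = b" and hx2: "?M2 *v x2 = b"
    by (simp_all add: x1_def x2_def matrix_vector_mul_assoc matrix_inv_right inv1 inv2)
  have N1: "(?M1 ** ?M2) *v x1 = ?M2 *v b"
    by (simp only: matrix_vector_mul_assoc[symmetric] resolvent_factors_commute[of s1] hx1)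
  have N2: "(?M1 ** ?M2) *v x2 = ?M1 *v b"
    by (simp add: matrix_vector_mul_assoc[symmetric] hx2)
  have invN: "invertible (?M1 ** ?M2)" by (rule invertible_mult[OF inv1 inv2])
  have scale: "(1 / (s2 - s1)) *s ((s2 - s1) *s v) = v" for v :: "'a^'n"
  proof -
    have "1 / (s2 - s1) * (s2 - s1) = 1" using assms(3) by simp
    then show ?thesis by (simp only: vector_smult_assoc vector_smult_lid)
  qed
  show "matrix_inv (?M1 ** ?M2) *v b = (1 / (s2 - s1)) *s (x1 - x2)"
  proof (rule matrix_inv_mult_eqI[OF invN])
    have N: "(?M1 ** ?M2) *v (x1 - x2) = (s2 - s1) *s b"
      by (simp add: matrix_vector_mult_diff_distrib N1 N2 matrix_vector_mult_diff_rdistrib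
          mat_mult_vector vec_eq_iff algebra_simps)
    show "(?M1 ** ?M2) *v ((1 / (s2 - s1)) *s (x1 - x2)) = b"
      by (simp only: vector_scalar_commute N scale)
  qed
  show "matrix_inv (?M1 ** ?M2) *v (A *v b) = (1 / (s2 - s1)) *s (s1 *s x1 - s2 *s x2)"
  proof (rule matrix_inv_mult_eqI[OF invN])
    have N: "(?M1 ** ?M2) *v (s1 *s x1 - s2 *s x2) = (s2 - s1) *s (A *v b)"
      by (simp add: matrix_vector_mult_diff_distrib vector_scalar_commute N1 N2
          matrix_vector_mult_diff_rdistrib mat_mult_vector vec_eq_iff algebra_simps)
    show "(?M1 ** ?M2) *v ((1 / (s2 - s1)) *s (s1 *s x1 - s2 *s x2)) = A *v b"
      by (simp only: vector_scalar_commute N scale)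
  qed
qed

lemma dotp_inverse_resolvent_product:
  fixes A :: "complex^'n^'n"
  assumes "invertible (mat s1 - A)" "invertible (mat s2 - A)" "s1 \<noteq> s2"
  shows "dotp c (matrix_inv ((mat s1 - A) ** (mat s2 - A)) *v b) =
      (tf A b c s1 - tf A b c s2) / (s2 - s1)"
    and "dotp c (matrix_inv ((mat s1 - A) ** (mat s2 - A)) *v (A *v b)) =
      (s1 * tf A b c s1 - s2 * tf A b c s2) / (s2 - s1)"
proof -
  note inverse_product = inverse_resolvent_product_mult_vector[OF assms]
  show "dotp c (matrix_inv ((mat s1 - A) ** (mat s2 - A)) *v b) =
      (tf A b c s1 - tf A b c s2) / (s2 - s1)"
    by (simp only: inverse_product(1))
      (simp add: tf_eq_dotp dotp_scale_right dotp_diff_right diff_divide_distrib)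
  show "dotp c (matrix_inv ((mat s1 - A) ** (mat s2 - A)) *v (A *v b)) =
      (s1 * tf A b c s1 - s2 * tf A b c s2) / (s2 - s1)"
    by (simp only: inverse_product(2))
      (simp add: tf_eq_dotp dotp_scale_right dotp_diff_right diff_divide_distrib)
qed

lemma vector_mult_outer_prod: "y v* outer_prod b c = dotp y b *s c"
  by (simp add: vec_eq_iff vector_matrix_mult_def outer_prod_def dotp_def sum_distrib_right
      mult.assoc)

lemma cmat_outer_prod: "cmat (outer_prod b c) = outer_prod (cvec b) (cvec c)"
  by (simp add: vec_eq_iff cmat_def cvec_def outer_prod_def)

lemma dotp_sandwich_outer_prods:
  fixes N A :: "'a::field^'n^'n"
  shows "dotp (u v* (N ** (mat k ** outer_prod b b + A ** outer_prod b b ** transpose A)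
      ** transpose N)) u = k * (dotp u (N *v b))^2 + (dotp u (N *v (A *v b)))^2"
proof -
  define y where "y = u v* N"
  have y: "dotp y v = dotp u (N *v v)" for v by (simp add: y_def dotp_matrix_vector_mult)
  have "u v* (N ** (mat k ** outer_prod b b + A ** outer_prod b b ** transpose A) ** transpose N)
      = N *v (y v* (mat k ** outer_prod b b) + y v* (A ** outer_prod b b ** transpose A))"
    by (simp add: y_def vector_matrix_mul_assoc[symmetric] vector_matrix_mult_add_rdistrib)
  also have "\<dots> = N *v ((k * dotp y b) *s b + dotp y (A *v b) *s (A *v b))"
    by (simp add: vector_matrix_mul_assoc[symmetric] vector_mult_mat vector_mult_outer_prod
        scalar_vector_matrix_assoc vector_scalar_commute dotp_matrix_vector_mult dotp_scale_left)
  finally have "dotp (u v* (N ** (mat k ** outer_prod b b + A ** outer_prod b b ** transpose A)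
      ** transpose N)) u = dotp y ((k * dotp y b) *s b + dotp y (A *v b) *s (A *v b))"
    by (simp add: dotp_commute[of _ u] dotp_matrix_vector_mult y_def)
  then show ?thesis by (simp add: dotp_add_right dotp_scale_right y power2_eq_square)
qed

lemma resolvent_product_quadratic_form:
  fixes A :: "real^'n^'n" and B C :: "real^'n"
  assumes "\<not> is_eigenvalue (cmat A) s1" "\<not> is_eigenvalue (cmat A) s2" "s1 \<noteq> s2"
  defines "G \<equiv> tf (cmat A) (cvec B) (cvec C)"
  shows "(\<Sum>i\<in>UNIV. (cvec C v*
        (matrix_inv ((mat s1 - cmat A) ** (mat s2 - cmat A))
         ** (mat (s1 * s2) ** cmat (\<chi> i j. B$i * B$j)
             + cmat A ** cmat (\<chi> i j. B$i * B$j) ** transpose (cmat A))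
         ** transpose (matrix_inv ((mat s1 - cmat A) ** (mat s2 - cmat A))))) $ i
      * cvec C $ i) =
      s1 * s2 * ((G s1 - G s2) / (s2 - s1))^2 + ((s1 * G s1 - s2 * G s2) / (s2 - s1))^2"
  using dotp_inverse_resolvent_product[OF invertible_mat_minus_if_not_eigenvalue[OF assms(1)]
      invertible_mat_minus_if_not_eigenvalue[OF assms(2)] assms(3), of "cvec C" "cvec B"]
  by (simp add: G_def dotp_def[symmetric] outer_prod_def[symmetric] cmat_outer_prod
      dotp_sandwich_outer_prods)

lemma tf_two_pole_model:
  fixes s s1 s2 b1 b2 :: complex
  assumes "s + s1 \<noteq> 0" "s + s2 \<noteq> 0"
  shows "tf (diag_mat (vector [- s1, - s2] :: complex^2)) (vector [b1, b2]) (vector [1, 1]) s =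
    b1 / (s + s1) + b2 / (s + s2)"
proof -
  have "s \<noteq> vector [- s1, - s2] $ i" for i :: 2
    using assms exhaust_2[of i] by (auto simp: add_eq_0_iff)
  then show ?thesis by (simp add: tf_diag_mat sum_2)
qed

lemma two_pole_h2_identity:
  fixes s1 s2 b1 b2 g1 g2 :: complex
  assumes "s1 \<noteq> 0" "s2 \<noteq> 0" "s1 + s2 \<noteq> 0" "s1 \<noteq> s2"
    and "g1 = b1 / (2 * s1) + b2 / (s1 + s2)" "g2 = b1 / (s1 + s2) + b2 / (2 * s2)"
  shows "b1 * g1 + b2 * g2 =
    2 * (s1 + s2) * (s1 * s2 * ((g1 - g2) / (s2 - s1))^2 + ((s1 * g1 - s2 * g2) / (s2 - s1))^2)"
proof -
  have g1: "2 * s1 * (s1 + s2) * g1 = (s1 + s2) * b1 + 2 * s1 * b2"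
  proof -
    have "2 * s1 * (s1 + s2) * g1 =
        (s1 + s2) * (2 * s1 * (b1 / (2 * s1))) + 2 * s1 * ((s1 + s2) * (b2 / (s1 + s2)))"
      unfolding assms(5) by (simp add: distrib_left mult_ac add_divide_distrib)
    then show ?thesis using assms(1,3) by simp
  qed
  have g2: "2 * s2 * (s1 + s2) * g2 = 2 * s2 * b1 + (s1 + s2) * b2"
  proof -
    have "2 * s2 * (s1 + s2) * g2 =
        2 * s2 * ((s1 + s2) * (b1 / (s1 + s2))) + (s1 + s2) * (2 * s2 * (b2 / (2 * s2)))"
      unfolding assms(6) by (simp add: distrib_left mult_ac add_divide_distrib)
    then show ?thesis using assms(2,3) by simp
  qed
  have "(b1 * g1 + b2 * g2) * (s2 - s1)^2 =
      2 * (s1 + s2) * (s1 * s2 * (g1 - g2)^2 + (s1 * g1 - s2 * g2)^2)"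
    using g1 g2 by algebra
  moreover have "s2 - s1 \<noteq> 0" using assms(4) by simp
  ultimately show ?thesis by (simp add: power_divide add_divide_distrib[symmetric]
      nonzero_eq_divide_eq mult.assoc)
qed

theorem lemma5:
  fixes A :: "real^'n^'n" and B C :: "real^'n"
    and s1 s2 b1 b2 :: complex
    and Am :: "complex^2^2" and Bm Cm :: "complex^2"
    and P :: "complex^2^2"
  defines "Am \<equiv> (\<chi> i j. if i = j then (vector [- s1, - s2] :: complex^2)$i else 0)"
    and "Bm \<equiv> vector [b1, b2]"
    and "Cm \<equiv> vector [1, 1]"
  assumes stableG: "hurwitz (cmat A)"
    and stableGm: "hurwitz Am"
    and distinct: "s1 \<noteq> s2"
    and not_eig: "\<not> is_eigenvalue (cmat A) s1" "\<not> is_eigenvalue (cmat A) s2"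
    and real_or_conj: "(Im s1 = 0 \<and> Im s2 = 0) \<or> s2 = cnj s1"
    and interp1: "tf Am Bm Cm s1 = tf (cmat A) (cvec B) (cvec C) s1"
    and interp2: "tf Am Bm Cm s2 = tf (cmat A) (cvec B) (cvec C) s2"
    and dinterp1: "deriv (tf Am Bm Cm) s1 = deriv (tf (cmat A) (cvec B) (cvec C)) s1"
    and dinterp2: "deriv (tf Am Bm Cm) s2 = deriv (tf (cmat A) (cvec B) (cvec C)) s2"
    and lyap: "Am ** P + P ** hadj Am + (\<chi> i j. Bm$i * cnj (Bm$j)) = 0"
  shows "(\<Sum>i\<in>UNIV. \<Sum>j\<in>UNIV. Cm$i * P$i$j * cnj (Cm$j)) =
    2 * (s1 + s2) *
    (\<Sum>i\<in>UNIV. (cvec C v*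
        (matrix_inv ((mat s1 - cmat A) ** (mat s2 - cmat A))
         ** (mat (s1 * s2) ** cmat (\<chi> i j. B$i * B$j)
             + cmat A ** cmat (\<chi> i j. B$i * B$j) ** transpose (cmat A))
         ** transpose (matrix_inv ((mat s1 - cmat A) ** (mat s2 - cmat A))))) $ i
      * cvec C $ i)"
proof -
  let ?G = "tf (cmat A) (cvec B) (cvec C)"
  have Am_diag: "Am = diag_mat (vector [- s1, - s2])" unfolding Am_def diag_mat_def ..
  have "Re (- s1) < 0" "Re (- s2) < 0"
    using hurwitz_diag_mat_Re_neg[OF stableGm[unfolded Am_diag], of 1]
      hurwitz_diag_mat_Re_neg[OF stableGm[unfolded Am_diag], of 2] by simp_all
  then have nonzero: "s1 \<noteq> 0" "s2 \<noteq> 0" "s1 + s2 \<noteq> 0"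
    by (auto simp: complex_eq_iff)
  have G1: "?G s1 = b1 / (2 * s1) + b2 / (s1 + s2)"
    unfolding interp1[symmetric] Am_diag Bm_def Cm_def mult_2 using nonzero
    by (intro tf_two_pole_model) auto
  have G2: "?G s2 = b1 / (s1 + s2) + b2 / (2 * s2)"
    unfolding interp2[symmetric] Am_diag Bm_def Cm_def mult_2 add.commute[of s1 s2] using nonzero
    by (intro tf_two_pole_model) (auto simp: add.commute)
  have interp_cnj: "cnj (tf Am Bm Cm (cnj s)) = ?G s" if "s \<in> {s1, s2}" for s
  proof -
    have "cnj s \<in> {s1, s2}" using that real_or_conj by (auto simp: complex_eq_iff)
    then have "tf Am Bm Cm (cnj s) = ?G (cnj s)" using interp1 interp2 by auto
    also have "\<dots> = cnj (?G s)" using that not_eig by (auto intro: tf_cmat_cnj)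
    finally show ?thesis by simp
  qed
  have lhs: "(\<Sum>i\<in>UNIV. \<Sum>j\<in>UNIV. Cm$i * P$i$j * cnj (Cm$j)) = b1 * ?G s1 + b2 * ?G s2"
    using h2_norm_diag_mat[OF stableGm[unfolded Am_diag] lyap[unfolded Am_diag], of Cm]
    by (simp add: sum_2 Am_diag[symmetric] interp_cnj, simp add: Bm_def Cm_def)
  show ?thesis
    unfolding lhs resolvent_product_quadratic_form[OF not_eig distinct]
    using nonzero distinct G1 G2 by (rule two_pole_h2_identity)
qed

end
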